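(* Fix $n\ge 1$ and finite sets $\mathsf{AP}^I_L$, $\mathsf{AP}^O$; let $\mathcal{I} = 2^{\mathsf{AP}^I_L\times\{0,\dots,n-1\}}$ and $\mathcal{O} = 2^{\mathsf{AP}^O\times\{0,\dots,n-1\}}$. Let $\tau : \mathcal{I}^*\to\mathcal{O}$ be a computation tree such that for every $t\in\mathcal{I}^*$, $\mathrm{rep}_S(t)$ divides $\mathrm{rep}_S(\tau(t))$ (where $\tau(t)$ is regarded as a word of length one). Then $\tau$ has a unique symmetric completion, and this symmetric completion has the symmetry property. Furthermore, if $\tau$ is regular, then so is its symmetric completion.
   Context: Modulo always returns a value in $\{0,\dots,n-1\}$. For a set $\mathsf{AP}$, $u \subseteq \mathsf{AP}\times\{0,\dots,n-1\}$ and $k\in\mathbb{Z}$, $\mathrm{rot}(u,k) = \{(p,(j+k)\bmod n)\mid (p,j)\in u\}$, extended letterwise to words. For such $x$, $\mathrm{rep}(x) = |\{j\in\{0,\dots,n-1\} \mid \mathrm{rot}(x,j)=x\}|$; for words, $\mathrm{rep}_S(\epsilon) = n$ and $\mathrm{rep}_S(w_0\dots w_l) = \gcd(\mathrm{rep}_S(w_0\dots w_{l-1}),\mathrm{rep}(w_l))$. A computation tree is a map $\tau:\mathcal{I}^*\to\mathcal{O}$; it has the symmetry property if $\tau(\mathrm{rot}(t,i)) = \mathrm{rot}(\tau(t),i)$ for all $t$ and $0\le i<n$; it is regular if the set of subtrees $t\mapsto\tau(\hat t t)$, $\hat t\in\mathcal{I}^*$, is finite. Fix the lexicographic order on $\mathcal{I}^*$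 induced by a total order on $\mathcal{I}$ (the lexicographic order of the tuple representation of letters), and let $\eta_S(t) = \min_{0\le i<n}\mathrm{rot}(t,i)$. A symmetric completion of $\tau$ is a tree $\tau'$ such that for every $t\in\mathcal{I}^*$, $\tau'(t) = \mathrm{rot}(\tau(\eta_S(t)),i)$ for some $i\in\mathbb{N}$ with $\mathrm{rot}(\eta_S(t),i) = t$. *)

theory Defs
  imports Main
begin

definition rot :: "nat \<Rightarrow> ('a \<times> nat) set \<Rightarrow> int \<Rightarrow> ('a \<times> nat) set" where
  "rot n u k = {(p, nat ((int j + k) mod int n)) | p j. (p, j) \<in> u}"

definition rotw :: "nat \<Rightarrow> ('a \<times> nat) set list \<Rightarrow> int \<Rightarrow> ('a \<times> nat) set list" where
  "rotw n w k = map (\<lambda>u. rot n u k) w"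

definition rep :: "nat \<Rightarrow> ('a \<times> nat) set \<Rightarrow> nat" where
  "rep n x = card {j \<in> {0..<n}. rot n x (int j) = x}"

definition repS :: "nat \<Rightarrow> ('a \<times> nat) set list \<Rightarrow> nat" where
  "repS n w = foldl (\<lambda>g l. gcd g (rep n l)) n w"

definition alph :: "'a set \<Rightarrow> nat \<Rightarrow> ('a \<times> nat) set set" where
  "alph AP n = Pow (AP \<times> {0..<n})"

definition eta :: "nat \<Rightarrow> (('a \<times> nat) set \<times> ('a \<times> nat) set) set
                   \<Rightarrow> ('a \<times> nat) set list \<Rightarrow> ('a \<times> nat) set list" where
  "eta n r t = (THE m. m \<in> {rotw n t (int i) | i. i < n} \<and>
       (\<forall>s \<in> {rotw n t (int i) | i. i < n}. s = m \<or> (m, s) \<in> lexord r))"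

definition symmetric_completion ::
  "'a set \<Rightarrow> nat \<Rightarrow> (('a \<times> nat) set \<times> ('a \<times> nat) set) set
   \<Rightarrow> (('a \<times> nat) set list \<Rightarrow> ('b \<times> nat) set)
   \<Rightarrow> (('a \<times> nat) set list \<Rightarrow> ('b \<times> nat) set) \<Rightarrow> bool" where
  "symmetric_completion API n r \<tau> \<tau>' \<longleftrightarrow>
     (\<forall>t \<in> lists (alph API n). \<exists>i::nat.
        rotw n (eta n r t) (int i) = t \<and> \<tau>' t = rot n (\<tau> (eta n r t)) (int i))"

definition symmetry_property ::
  "'a set \<Rightarrow> nat \<Rightarrow> (('a \<times> nat) set list \<Rightarrow> ('b \<times> nat) set) \<Rightarrow> bool" where
  "symmetry_property API n \<tau> \<longleftrightarrow>
     (\<forall>t \<in> lists (alph API n). \<forall>i < n. \<tau> (rotw n t (int i)) = rot n (\<tau> t) (int i))"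

definition regular_tree ::
  "'a set \<Rightarrow> nat \<Rightarrow> (('a \<times> nat) set list \<Rightarrow> 'c) \<Rightarrow> bool" where
  "regular_tree API n \<tau> \<longleftrightarrow>
     finite {(\<lambda>t. if t \<in> lists (alph API n) then \<tau> (h @ t) else undefined) | h.
               h \<in> lists (alph API n)}"

end

theory Submission
  imports Defs
begin

text \<open>
  A completion must map t to a rotation of \<tau> (eta t) by some i with rot (eta t, i) = t; it is
  well defined because every rotation fixing a word w also fixes \<tau> w. Indeed the rotations
  fixing a letter u form the subgroup (n / rep u)\<int> of \<int>, so a rotation by a fixes w iff
  n divides a * repS w, and repS w divides rep (\<tau> w). Rotation invariance of eta then gives
  the symmetry property. For regularity, eta (h t) = eta h \<cdot> rot (t, k), where k ranges over the
  shifts taking h to eta h and is chosen to minimise rot (t, k); so the subtree of the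
  completion at h is determined by the subtree of \<tau> at eta h and the set of these shifts.
\<close>

lemma int_multiple_mem_if_diff_closed:
  fixes T :: "int set"
  assumes diff_closed: "\<And>a b. a \<in> T \<Longrightarrow> b \<in> T \<Longrightarrow> a - b \<in> T" and a: "a \<in> T"
  shows "a * k \<in> T"
proof (induction k rule: int_induct[where k = 0])
  case base
  show ?case using diff_closed[OF a a] by simp
next
  case (step1 i)
  have "a - a - a \<in> T" using diff_closed a by blast
  from diff_closed[OF step1(2) this] show ?case by (simp add: algebra_simps)
next
  case (step2 i)
  from diff_closed[OF step2(2) a] show ?case by (simp add: algebra_simps)
qed

lemma int_diff_closed_eq_multiples:
  fixes T :: "int set"
  assumes diff_closed: "\<And>a b. a \<in> T \<Longrightarrow> b \<in> T \<Longrightarrow> a - b \<in> T" and "int n \<in> T" "0 < n"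
  obtains d :: nat where "0 < d" "d dvd n" "T = {a. int d dvd a}"
proof -
  have mult: "a * k \<in> T" if "a \<in> T" for a k
    using diff_closed that by (rule int_multiple_mem_if_diff_closed)
  define d where "d = (LEAST d. 0 < d \<and> int d \<in> T)"
  have "0 < d \<and> int d \<in> T"
    unfolding d_def by (rule LeastI[of _ n]) (simp add: assms(2,3))
  then have d: "0 < d" "int d \<in> T" by simp_all
  have T: "T = {a. int d dvd a}"
  proof (intro set_eqI iffI)
    fix a assume "a \<in> T"
    have "a mod int d = a - int d * (a div int d)" by (rule minus_mult_div_eq_mod[symmetric])
    also have "\<dots> \<in> T" using diff_closed[OF \<open>a \<in> T\<close> mult[OF d(2)]] .
    finally have mod_in: "int (nat (a mod int d)) \<in> T" using d(1) by simp
    have "nat (a mod int d) < d" using d(1) by (simp add: nat_less_iff)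
    then have "\<not> (0 < nat (a mod int d) \<and> int (nat (a mod int d)) \<in> T)"
      unfolding d_def by (rule not_less_Least)
    moreover have "0 \<le> a mod int d" using d(1) by simp
    ultimately have "a mod int d = 0" using mod_in by simp
    then show "a \<in> {a. int d dvd a}" by (simp add: dvd_eq_mod_eq_0)
  next
    fix a assume "a \<in> {a. int d dvd a}"
    then show "a \<in> T" using mult[OF d(2)] by (auto elim: dvdE)
  qed
  with assms(2) have "d dvd n" by simp
  with d(1) T show thesis using that by blast
qed

lemma card_multiples_below:
  assumes "0 < d" "d dvd n"
  shows "card {j \<in> {0..<n}. int d dvd int j} = n div d"
proof -
  obtain e where n: "n = d * e" using assms(2) by blast
  have "{j \<in> {0..<n}. int d dvd int j} = (\<lambda>k. d * k) ` {0..<e}"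
  proof (intro set_eqI iffI)
    fix j assume "j \<in> {j \<in> {0..<n}. int d dvd int j}"
    then obtain k where "j = d * k" "j < n" by auto
    with n assms(1) show "j \<in> (\<lambda>k. d * k) ` {0..<e}" by simp
  next
    fix j assume "j \<in> (\<lambda>k. d * k) ` {0..<e}"
    with n assms(1) show "j \<in> {j \<in> {0..<n}. int d dvd int j}" by auto
  qed
  then show ?thesis using assms(1) n by (simp add: card_image inj_on_def)
qed

lemma dvd_mult_gcd_int:
  fixes c a :: int and g h :: nat
  assumes "c dvd a * int g" "c dvd a * int h"
  shows "c dvd a * int (gcd g h)"
proof -
  have "c dvd gcd (a * int g) (a * int h)" using assms by (rule gcd_greatest)
  then show ?thesis by (simp add: gcd_mult_left)
qed

definition least_wrt :: "('x \<times> 'x) set \<Rightarrow> 'x set \<Rightarrow> 'x \<Rightarrow> bool" where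
  "least_wrt R S m \<longleftrightarrow> m \<in> S \<and> (\<forall>s \<in> S. s = m \<or> (m, s) \<in> R)"

lemma least_wrt_unique:
  assumes "trans R" "irrefl R" "least_wrt R S m" "least_wrt R S m'"
  shows "m = m'"
  using assms unfolding least_wrt_def irrefl_def by (metis transD)

lemma finite_least_wrt_exists:
  assumes "trans R" "total_on S R" "finite S" "S \<noteq> {}"
  shows "\<exists>m. least_wrt R S m"
  using assms(3,4,2)
proof (induction S rule: finite_ne_induct)
  case (insert x S)
  then obtain m where m: "least_wrt R S m" by (meson subset_insertI total_on_subset)
  with insert.prems have "x = m \<or> (x, m) \<in> R \<or> (m, x) \<in> R"
    unfolding least_wrt_def total_on_def by blast
  then show ?case
    using m assms(1) unfolding least_wrt_def by (metis insert_iff transD)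
qed (auto simp: least_wrt_def)

lemma total_on_lexord_lists:
  assumes "total_on A r"
  shows "total_on (lists A) (lexord r)"
  unfolding total_on_def
proof (intro ballI impI)
  fix xs ys assume "xs \<in> lists A" "ys \<in> lists A" "xs \<noteq> ys"
  then show "(xs, ys) \<in> lexord r \<or> (ys, xs) \<in> lexord r"
  proof (induction xs arbitrary: ys)
    case Nil
    then show ?case by (cases ys) auto
  next
    case (Cons x xs)
    then show ?case using assms by (cases ys) (auto simp: total_on_def)
  qed
qed

lemma strict_linear_order_on_lexord:
  assumes "strict_linear_order_on A r"
  shows "strict_linear_order_on (lists A) (lexord r)"
  using assms
  by (simp add: strict_linear_order_on_def lexord_transI lexord_irrefl total_on_lexord_lists)

lemma finite_image_if_factors:
  assumes "finite (g ` A)" and factors: "\<And>x y. x \<in> A \<Longrightarrow> y \<in> A \<Longrightarrow> g x = g y \<Longrightarrow> f x = f y"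
  shows "finite (f ` A)"
proof -
  have "f x = f (inv_into A g (g x))" if "x \<in> A" for x
    using that by (intro factors) (auto simp: inv_into_into f_inv_into_f)
  then have "f ` A = (\<lambda>z. f (inv_into A g z)) ` g ` A"
    by (auto simp: image_image)
  then show ?thesis using assms(1) by simp
qed

lemma rot_conv_image: "rot n u k = (\<lambda>(p, j). (p, nat ((int j + k) mod int n))) ` u"
  by (auto simp: rot_def)

lemma rot_rot:
  assumes "0 < n"
  shows "rot n (rot n u a) b = rot n u (a + b)"
  using assms by (simp add: rot_conv_image image_image case_prod_beta mod_add_left_eq add.assoc)

lemma rot_mod: "rot n u (a mod int n) = rot n u a"
  by (simp add: rot_conv_image mod_add_right_eq)

lemma rot_0:
  assumes "u \<in> alph X n"
  shows "rot n u 0 = u"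
proof -
  have "(\<lambda>(p, j). (p, nat ((int j + 0) mod int n))) ` u = id ` u"
    using assms by (intro image_cong) (auto simp: alph_def)
  then show ?thesis by (simp add: rot_conv_image)
qed

lemma rot_in_alph:
  assumes "0 < n" "u \<in> alph X n"
  shows "rot n u a \<in> alph X n"
  using assms by (auto simp: alph_def rot_conv_image nat_less_iff)

lemma rot_eq_self_iff:
  assumes n: "0 < n" and u: "u \<in> alph X n"
  shows "rot n u a = u \<longleftrightarrow> int n dvd a * int (rep n u)"
proof -
  let ?T = "{a. rot n u a = u}"
  have "a - b \<in> ?T" if "a \<in> ?T" "b \<in> ?T" for a b
    using that rot_rot[OF n, of u b "a - b"] by simp
  moreover have "int n \<in> ?T"
    using rot_mod[of n u "int n"] rot_0[OF u] by simp
  ultimately obtain d where d: "0 < d" "d dvd n" and T: "?T = {a. int d dvd a}"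
    using int_diff_closed_eq_multiples n by metis
  then obtain e where ne: "n = d * e" by blast
  have "rep n u = e"
    using card_multiples_below[OF d] T d(1) ne unfolding rep_def by (auto simp: set_eq_iff)
  moreover have "0 < e" using n ne by simp
  ultimately have "int n dvd a * int (rep n u) \<longleftrightarrow> int d dvd a" using ne by simp
  also have "\<dots> \<longleftrightarrow> rot n u a = u" using T by blast
  finally show ?thesis by simp
qed

lemma rotw_rotw:
  assumes "0 < n"
  shows "rotw n (rotw n w a) b = rotw n w (a + b)"
  using assms by (simp add: rotw_def rot_rot)

lemma rotw_0:
  assumes "w \<in> lists (alph X n)"
  shows "rotw n w 0 = w"
  using assms by (induction w) (auto simp: rotw_def rot_0)

lemma rotw_in_lists:
  assumes "0 < n" "w \<in> lists (alph X n)"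
  shows "rotw n w a \<in> lists (alph X n)"
  using assms by (auto simp: rotw_def rot_in_alph)

lemma rotw_append: "rotw n (v @ w) a = rotw n v a @ rotw n w a"
  by (simp add: rotw_def)

lemma rotw_inverse:
  assumes "0 < n" "w \<in> lists (alph X n)"
  shows "rotw n (rotw n w a) (- a) = w"
  using assms by (simp add: rotw_rotw rotw_0)

lemma rotw_eq_rotw_nat:
  assumes "0 < n"
  shows "rotw n w a = rotw n w (int (nat (a mod int n)))"
  using assms by (simp add: rotw_def rot_mod)

lemma rotw_eq_self_dvd_repS:
  assumes n: "0 < n" and w: "w \<in> lists (alph X n)" and fixed: "rotw n w a = w"
  shows "int n dvd a * int (repS n w)"
proof -
  have "int n dvd a * int (foldl (\<lambda>g l. gcd g (rep n l)) g w)" if "int n dvd a * int g" for g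
    using w fixed that
  proof (induction w arbitrary: g)
    case (Cons l w)
    then have "rot n l a = l" "rotw n w a = w" by (auto simp: rotw_def)
    moreover have "l \<in> alph X n" using Cons by simp
    ultimately have "int n dvd a * int (rep n l)" using rot_eq_self_iff[OF n] by blast
    with Cons.IH \<open>rotw n w a = w\<close> Cons.prems(2) show ?case by (simp add: dvd_mult_gcd_int)
  qed simp
  then show ?thesis unfolding repS_def by simp
qed

definition rotations :: "nat \<Rightarrow> ('a \<times> nat) set list \<Rightarrow> ('a \<times> nat) set list set" where
  "rotations n t = {rotw n t (int i) | i. i < n}"

lemma rotations_eq_range:
  assumes "0 < n"
  shows "rotations n t = range (rotw n t)"
proof (intro equalityI subsetI)
  fix s assume "s \<in> range (rotw n t)"
  then obtain a where "s = rotw n t a" by blast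
  moreover have "nat (a mod int n) < n" using assms by (simp add: nat_less_iff)
  ultimately show "s \<in> rotations n t"
    unfolding rotations_def using rotw_eq_rotw_nat[OF assms] by blast
qed (auto simp: rotations_def)

lemma rotations_rotw:
  assumes "0 < n"
  shows "rotations n (rotw n t a) = rotations n t"
proof -
  have "range (rotw n t \<circ> (+) a) = range (rotw n t)"
    by (metis image_comp surj_plus)
  then show ?thesis
    unfolding rotations_eq_range[OF assms] by (simp add: comp_def rotw_rotw[OF assms])
qed

lemma eta_conv_least_wrt: "eta n r t = (THE m. least_wrt (lexord r) (rotations n t) m)"
  by (simp add: eta_def rotations_def least_wrt_def)

definition subtree ::
  "'a set \<Rightarrow> nat \<Rightarrow> (('a \<times> nat) set list \<Rightarrow> 'c) \<Rightarrow> ('a \<times> nat) set list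
   \<Rightarrow> ('a \<times> nat) set list \<Rightarrow> 'c" where
  "subtree API n f h = (\<lambda>t. if t \<in> lists (alph API n) then f (h @ t) else undefined)"

lemma regular_tree_iff_finite_subtrees:
  "regular_tree API n f \<longleftrightarrow> finite (subtree API n f ` lists (alph API n))"
  by (simp add: regular_tree_def subtree_def Setcompr_eq_image)

context
  fixes API :: "'a set" and n :: nat and r :: "(('a \<times> nat) set \<times> ('a \<times> nat) set) set"
  assumes n: "0 < n" and order: "strict_linear_order_on (alph API n) r"
begin

lemma least_wrt_lexord_exists:
  assumes "S \<subseteq> lists (alph API n)" "finite S" "S \<noteq> {}"
  shows "\<exists>m. least_wrt (lexord r) S m"
  using strict_linear_order_on_lexord[OF order] assms
  by (intro finite_least_wrt_exists) (auto simp: strict_linear_order_on_def intro: total_on_subset)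

lemma eta_eqI:
  assumes "least_wrt (lexord r) (rotations n t) m"
  shows "eta n r t = m"
proof -
  have "trans (lexord r)" "irrefl (lexord r)"
    using strict_linear_order_on_lexord[OF order] by (simp_all add: strict_linear_order_on_def)
  then show ?thesis
    unfolding eta_conv_least_wrt using assms by (auto intro: the_equality least_wrt_unique)
qed

lemma eta_least:
  assumes t: "t \<in> lists (alph API n)"
  shows "least_wrt (lexord r) (rotations n t) (eta n r t)"
proof -
  have "rotations n t \<subseteq> lists (alph API n)" "finite (rotations n t)" "rotations n t \<noteq> {}"
    using rotw_in_lists[OF n t] n by (auto simp: rotations_def)
  then obtain m where "least_wrt (lexord r) (rotations n t) m"
    using least_wrt_lexord_exists by blast
  with eta_eqI show ?thesis by simp
qed

lemma eta_in_rotations: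
  assumes "t \<in> lists (alph API n)"
  shows "eta n r t \<in> rotations n t"
  using eta_least[OF assms] by (simp add: least_wrt_def)

lemma eta_in_lists:
  assumes t: "t \<in> lists (alph API n)"
  shows "eta n r t \<in> lists (alph API n)"
proof -
  obtain i where "eta n r t = rotw n t (int i)"
    using eta_in_rotations[OF t] by (auto simp: rotations_def)
  then show ?thesis using rotw_in_lists[OF n t] by simp
qed

lemma eta_rotw: "eta n r (rotw n t a) = eta n r t"
  by (simp add: eta_conv_least_wrt rotations_rotw[OF n])

lemma rotw_eta_exists:
  assumes t: "t \<in> lists (alph API n)"
  shows "\<exists>i. rotw n (eta n r t) (int i) = t"
proof -
  obtain a where "eta n r t = rotw n t a"
    using eta_in_rotations[OF t] rotations_eq_range[OF n] by auto
  then have "rotw n (eta n r t) (int (nat (- a mod int n))) = t"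
    using rotw_inverse[OF n t] rotw_eq_rotw_nat[OF n] by metis
  then show ?thesis by blast
qed

definition eta_shifts :: "('a \<times> nat) set list \<Rightarrow> nat set" where
  "eta_shifts h = {k \<in> {0..<n}. rotw n h (int k) = eta n r h}"

text \<open>Among the rotations of h @ t, those starting with eta h are the least ones, and
  among these the order is decided by the rotated suffix.\<close>
lemma eta_append:
  assumes h: "h \<in> lists (alph API n)" and t: "t \<in> lists (alph API n)"
    and k: "k \<in> eta_shifts h"
    and least: "least_wrt (lexord r) ((\<lambda>k. rotw n t (int k)) ` eta_shifts h) (rotw n t (int k))"
  shows "eta n r (h @ t) = eta n r h @ rotw n t (int k)"
proof (rule eta_eqI)
  have k': "k < n" "rotw n h (int k) = eta n r h" using k by (auto simp: eta_shifts_def)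
  have "(eta n r h @ rotw n t (int k), rotw n h (int k') @ rotw n t (int k')) \<in> lexord r"
    if "k' < n" "rotw n h (int k') @ rotw n t (int k') \<noteq> eta n r h @ rotw n t (int k)" for k'
  proof (cases "rotw n h (int k') = eta n r h")
    case True
    with that least show ?thesis
      by (auto simp: least_wrt_def eta_shifts_def intro: lexord_append_leftI)
  next
    case False
    with that eta_least[OF h] have "(eta n r h, rotw n h (int k')) \<in> lexord r"
      by (auto simp: least_wrt_def rotations_def)
    then show ?thesis by (rule lexord_sufI) (simp add: k'(2)[symmetric] rotw_def)
  qed
  moreover have "eta n r h @ rotw n t (int k) \<in> rotations n (h @ t)"
    using k' unfolding rotations_def rotw_append by (auto intro!: exI[of _ k])
  ultimately show "least_wrt (lexord r) (rotations n (h @ t)) (eta n r h @ rotw n t (int k))"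
    unfolding least_wrt_def rotations_def rotw_append by blast
qed

lemma eta_append_shift_exists:
  assumes h: "h \<in> lists (alph API n)" and t: "t \<in> lists (alph API n)"
  obtains k where "k \<in> eta_shifts h"
    and "least_wrt (lexord r) ((\<lambda>k. rotw n t (int k)) ` eta_shifts h) (rotw n t (int k))"
proof -
  obtain k where "k < n" "rotw n h (int k) = eta n r h"
    using eta_in_rotations[OF h] by (auto simp: rotations_def)
  then have "(\<lambda>k. rotw n t (int k)) ` eta_shifts h \<noteq> {}" by (auto simp: eta_shifts_def)
  moreover have "(\<lambda>k. rotw n t (int k)) ` eta_shifts h \<subseteq> lists (alph API n)"
    using rotw_in_lists[OF n t] by blast
  moreover have "finite ((\<lambda>k. rotw n t (int k)) ` eta_shifts h)"
    by (simp add: eta_shifts_def)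
  ultimately obtain m where "least_wrt (lexord r) ((\<lambda>k. rotw n t (int k)) ` eta_shifts h) m"
    using least_wrt_lexord_exists by blast
  then show thesis using that by (auto simp: least_wrt_def)
qed

context
  fixes APO :: "'b set" and \<tau> :: "('a \<times> nat) set list \<Rightarrow> ('b \<times> nat) set"
  assumes tau_range: "\<forall>t \<in> lists (alph API n). \<tau> t \<in> alph APO n"
    and rep_dvd: "\<forall>t \<in> lists (alph API n). repS n t dvd repS n [\<tau> t]"
begin

lemma rot_tau_cong:
  assumes t: "t \<in> lists (alph API n)" and eq: "rotw n t a = rotw n t b"
  shows "rot n (\<tau> t) a = rot n (\<tau> t) b"
proof -
  have "rotw n t (a - b) = t"
    using rotw_inverse[OF n t, of b] eq rotw_rotw[OF n, of t a "- b"] by simp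
  then have "int n dvd (a - b) * int (repS n t)"
    by (rule rotw_eq_self_dvd_repS[OF n t])
  moreover have "repS n t dvd rep n (\<tau> t)"
    using rep_dvd t by (simp add: repS_def)
  ultimately have "int n dvd (a - b) * int (rep n (\<tau> t))"
    by (meson dvd_trans mult_dvd_mono dvd_refl of_nat_dvd_iff)
  then have "rot n (\<tau> t) (a - b) = \<tau> t"
    using rot_eq_self_iff[OF n] tau_range t by blast
  then show ?thesis
    using rot_rot[OF n, of "\<tau> t" "a - b" b] by simp
qed

definition canonical_completion :: "('a \<times> nat) set list \<Rightarrow> ('b \<times> nat) set" where
  "canonical_completion t =
     rot n (\<tau> (eta n r t)) (int (SOME i. rotw n (eta n r t) (int i) = t))"

lemma canonical_completion_eq:
  assumes t: "t \<in> lists (alph API n)" and a: "rotw n (eta n r t) a = t"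
  shows "canonical_completion t = rot n (\<tau> (eta n r t)) a"
proof -
  have "rotw n (eta n r t) (int (SOME i. rotw n (eta n r t) (int i) = t)) = t"
    using someI_ex[OF rotw_eta_exists[OF t]] .
  then show ?thesis
    unfolding canonical_completion_def using a rot_tau_cong[OF eta_in_lists[OF t]] by metis
qed

lemma symmetric_completion_canonical:
  "symmetric_completion API n r \<tau> canonical_completion"
  unfolding symmetric_completion_def
  using rotw_eta_exists canonical_completion_eq by blast

lemma symmetric_completion_unique:
  assumes "symmetric_completion API n r \<tau> \<tau>'" "t \<in> lists (alph API n)"
  shows "\<tau>' t = canonical_completion t"
  using assms canonical_completion_eq unfolding symmetric_completion_def by fastforce

lemma symmetry_property_canonical: "symmetry_property API n canonical_completion"
  unfolding symmetry_property_def
proof (intro ballI allI impI)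
  fix t i assume t: "t \<in> lists (alph API n)"
  obtain j where j: "rotw n (eta n r t) (int j) = t"
    using rotw_eta_exists[OF t] by blast
  have eta_rotw_t: "eta n r (rotw n t (int i)) = eta n r t" by (rule eta_rotw)
  have "rotw n (eta n r (rotw n t (int i))) (int j + int i) = rotw n t (int i)"
    unfolding eta_rotw_t using j rotw_rotw[OF n, of "eta n r t" "int j" "int i"] by simp
  then have "canonical_completion (rotw n t (int i))
               = rot n (\<tau> (eta n r (rotw n t (int i)))) (int j + int i)"
    by (rule canonical_completion_eq[OF rotw_in_lists[OF n t]])
  also have "\<dots> = rot n (rot n (\<tau> (eta n r t)) (int j)) (int i)"
    unfolding eta_rotw_t by (simp add: rot_rot[OF n])
  also have "\<dots> = rot n (canonical_completion t) (int i)"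
    using canonical_completion_eq[OF t j] by simp
  finally show "canonical_completion (rotw n t (int i)) = rot n (canonical_completion t) (int i)" .
qed

lemma canonical_completion_append:
  assumes h: "h \<in> lists (alph API n)" and t: "t \<in> lists (alph API n)"
    and k: "k \<in> eta_shifts h"
    and least: "least_wrt (lexord r) ((\<lambda>k. rotw n t (int k)) ` eta_shifts h) (rotw n t (int k))"
  shows "canonical_completion (h @ t)
           = rot n (subtree API n \<tau> (eta n r h) (rotw n t (int k))) (- int k)"
proof -
  have eta: "eta n r (h @ t) = eta n r h @ rotw n t (int k)"
    by (rule eta_append[OF h t k least])
  have "rotw n h (int k) = eta n r h" using k by (simp add: eta_shifts_def)
  then have "rotw n (eta n r (h @ t)) (- int k) = h @ t"
    unfolding eta rotw_append using rotw_inverse[OF n h] rotw_inverse[OF n t] by metis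
  then have "canonical_completion (h @ t) = rot n (\<tau> (eta n r (h @ t))) (- int k)"
    using canonical_completion_eq h t by simp
  then show ?thesis
    using eta rotw_in_lists[OF n t] by (simp add: subtree_def)
qed

lemma regular_tree_canonical:
  assumes "regular_tree API n \<tau>"
  shows "regular_tree API n canonical_completion"
  unfolding regular_tree_iff_finite_subtrees
proof (rule finite_image_if_factors)
  let ?L = "lists (alph API n)"
  let ?g = "\<lambda>h. (subtree API n \<tau> (eta n r h), eta_shifts h)"
  have "?g ` ?L \<subseteq> subtree API n \<tau> ` ?L \<times> Pow {0..<n}"
    using eta_in_lists by (auto simp: eta_shifts_def)
  moreover have "finite (subtree API n \<tau> ` ?L \<times> Pow {0..<n})"
    using assms by (simp add: regular_tree_iff_finite_subtrees)
  ultimately show "finite (?g ` ?L)" by (rule finite_subset)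
  fix h1 h2 assume h: "h1 \<in> ?L" "h2 \<in> ?L" and g: "?g h1 = ?g h2"
  show "subtree API n canonical_completion h1 = subtree API n canonical_completion h2"
  proof
    fix t
    show "subtree API n canonical_completion h1 t = subtree API n canonical_completion h2 t"
    proof (cases "t \<in> ?L")
      case True
      obtain k where k: "k \<in> eta_shifts h1"
        and least: "least_wrt (lexord r) ((\<lambda>k. rotw n t (int k)) ` eta_shifts h1)
                      (rotw n t (int k))"
        using eta_append_shift_exists[OF h(1) True] by blast
      have "eta_shifts h1 = eta_shifts h2"
        and "subtree API n \<tau> (eta n r h1) = subtree API n \<tau> (eta n r h2)"
        using g by simp_all
      then have "canonical_completion (h1 @ t) = canonical_completion (h2 @ t)"
        using canonical_completion_append[OF h(1) True k least]
          canonical_completion_append[OF h(2) True, of k] k least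
        by simp
      then show ?thesis by (simp add: subtree_def)
    qed (simp add: subtree_def)
  qed
qed

end

end

theorem lemma8:
  fixes API :: "'a set" and APO :: "'b set" and n :: nat
    and r :: "(('a \<times> nat) set \<times> ('a \<times> nat) set) set"
    and \<tau> :: "('a \<times> nat) set list \<Rightarrow> ('b \<times> nat) set"
  assumes "n \<ge> 1" and "finite API" and "finite APO"
    and "strict_linear_order_on (alph API n) r"
    and "\<forall>t \<in> lists (alph API n). \<tau> t \<in> alph APO n"
    and "\<forall>t \<in> lists (alph API n). repS n t dvd repS n [\<tau> t]"
  shows "\<exists>\<tau>'. symmetric_completion API n r \<tau> \<tau>'
           \<and> (\<forall>\<tau>''. symmetric_completion API n r \<tau> \<tau>'' \<longrightarrow>
                   (\<forall>t \<in> lists (alph API n). \<tau>'' t = \<tau>' t))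
           \<and> symmetry_property API n \<tau>'
           \<and> (regular_tree API n \<tau> \<longrightarrow> regular_tree API n \<tau>')"
proof -
  have n: "0 < n" using assms(1) by simp
  note setting = n assms(4) assms(5) assms(6)
  show ?thesis
    using symmetric_completion_canonical[OF setting] symmetric_completion_unique[OF setting]
      symmetry_property_canonical[OF setting] regular_tree_canonical[OF setting]
    by blast
qed

end
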